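(* Let $(\Lambda,\Pi,\perp,\mathrm{push})$ be a realizability lattice. For all $P,R\in\mathcal P_\bullet(\Pi)$ and $L\subseteq\Lambda$: $L\leadsto_\bullet R\subseteq P$ if and only if $R\subseteq P\ast_\bullet L$.
   Context: A realizability lattice consists of sets $\Lambda$ (terms), $\Pi$ (stacks), a relation $\perp\subseteq\Lambda\times\Pi$ (write $t\perp\pi$) and a map $\mathrm{push}:\Lambda\times\Pi\to\Pi$, written $t\cdot\pi$. For $L\subseteq\Lambda$, $L^\perp=\{\pi:\forall t\in L,\ t\perp\pi\}$; for $P\subseteq\Pi$, ${}^\perp P=\{t:\forall \pi\in P,\ t\perp\pi\}$; $\overline P=({}^\perp P)^\perp$; $\widehat P=\bigcup_{\pi\in P}\overline{\{\pi\}}$; $\mathcal P_\bullet(\Pi)=\{P\subseteq\Pi:\widehat P=P\}$. For $L\subseteq\Lambda$, $P\subseteq\Pi$: $L\leadsto P=\{t\cdot\pi:t\in L,\pi\in P\}$, $L\leadsto_\bullet P=\widehat{L\leadsto P}$, and $P\ast_\bullet L=\{\pi\in\Pi: t\cdot\pi'\in P\text{ for all }t\in L,\ \pi'\in\overline{\{\pi\}}\}$. *)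

theory Defs
  imports Main
begin

definition orthL :: "('l \<Rightarrow> 'p \<Rightarrow> bool) \<Rightarrow> 'l set \<Rightarrow> 'p set" where
  "orthL perp L = {\<pi>. \<forall>t\<in>L. perp t \<pi>}"

definition orthP :: "('l \<Rightarrow> 'p \<Rightarrow> bool) \<Rightarrow> 'p set \<Rightarrow> 'l set" where
  "orthP perp P = {t. \<forall>\<pi>\<in>P. perp t \<pi>}"

definition bclos :: "('l \<Rightarrow> 'p \<Rightarrow> bool) \<Rightarrow> 'p set \<Rightarrow> 'p set" where
  "bclos perp P = orthL perp (orthP perp P)"

definition hatc :: "('l \<Rightarrow> 'p \<Rightarrow> bool) \<Rightarrow> 'p set \<Rightarrow> 'p set" where
  "hatc perp P = (\<Union>\<pi>\<in>P. bclos perp {\<pi>})"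

definition Pbullet :: "('l \<Rightarrow> 'p \<Rightarrow> bool) \<Rightarrow> 'p set set" where
  "Pbullet perp = {P. hatc perp P = P}"

definition arrowset :: "('l \<Rightarrow> 'p \<Rightarrow> 'p) \<Rightarrow> 'l set \<Rightarrow> 'p set \<Rightarrow> 'p set" where
  "arrowset push L P = {push t \<pi> | t \<pi>. t \<in> L \<and> \<pi> \<in> P}"

definition arrow_bullet :: "('l \<Rightarrow> 'p \<Rightarrow> bool) \<Rightarrow> ('l \<Rightarrow> 'p \<Rightarrow> 'p) \<Rightarrow> 'l set \<Rightarrow> 'p set \<Rightarrow> 'p set" where
  "arrow_bullet perp push L P = hatc perp (arrowset push L P)"

definition star_bullet :: "('l \<Rightarrow> 'p \<Rightarrow> bool) \<Rightarrow> ('l \<Rightarrow> 'p \<Rightarrow> 'p) \<Rightarrow> 'p set \<Rightarrow> 'l set \<Rightarrow> 'p set" where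
  "star_bullet perp push P L = {\<pi>. \<forall>t\<in>L. \<forall>\<pi>'\<in>bclos perp {\<pi>}. push t \<pi>' \<in> P}"

end

theory Submission
  imports Defs
begin

text \<open>The closure of a single stack is its upset for the specialisation preorder
  "every term orthogonal to \<pi> is orthogonal to \<pi>'", so the sets in \<open>Pbullet\<close> are exactly
  the upward closed ones. For upward closed \<open>P\<close>, \<open>L \<leadsto>\<^sub>\<bullet> R \<subseteq> P\<close> reduces to \<open>L \<leadsto> R \<subseteq> P\<close>;
  for upward closed \<open>R\<close>, so does \<open>R \<subseteq> P \<ast>\<^sub>\<bullet> L\<close>.\<close>

lemma bclos_singleton: "bclos perp {\<pi>} = {\<pi>'. \<forall>t. perp t \<pi> \<longrightarrow> perp t \<pi>'}"
  by (auto simp: bclos_def orthL_def orthP_def)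

lemma self_in_bclos_singleton: "\<pi> \<in> bclos perp {\<pi>}"
  by (simp add: bclos_singleton)

lemma subset_hatc: "P \<subseteq> hatc perp P"
  unfolding hatc_def using self_in_bclos_singleton by fast

lemma Pbullet_iff_upward_closed:
  "P \<in> Pbullet perp \<longleftrightarrow> (\<forall>\<pi>\<in>P. bclos perp {\<pi>} \<subseteq> P)"
  using subset_hatc[of P perp] by (auto simp: Pbullet_def hatc_def)

lemma hatc_subset_iff:
  assumes "P \<in> Pbullet perp"
  shows "hatc perp A \<subseteq> P \<longleftrightarrow> A \<subseteq> P"
proof
  show "A \<subseteq> P" if "hatc perp A \<subseteq> P"
    using subset_hatc that by (rule subset_trans)
  show "hatc perp A \<subseteq> P" if "A \<subseteq> P"
  proof -
    have "bclos perp {\<pi>} \<subseteq> P" if "\<pi> \<in> A" for \<pi>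
      using assms \<open>A \<subseteq> P\<close> that unfolding Pbullet_iff_upward_closed by blast
    then show ?thesis
      unfolding hatc_def by (rule UN_least)
  qed
qed

lemma subset_star_bullet_iff:
  assumes "R \<in> Pbullet perp"
  shows "R \<subseteq> star_bullet perp push P L \<longleftrightarrow> arrowset push L R \<subseteq> P"
proof
  assume R_star: "R \<subseteq> star_bullet perp push P L"
  show "arrowset push L R \<subseteq> P"
  proof
    fix x assume "x \<in> arrowset push L R"
    then obtain t \<pi> where "x = push t \<pi>" "t \<in> L" "\<pi> \<in> R"
      unfolding arrowset_def by auto
    moreover have "\<pi> \<in> bclos perp {\<pi>}"
      by (rule self_in_bclos_singleton)
    ultimately show "x \<in> P"
      using R_star unfolding star_bullet_def by auto
  qed
next
  assume arrow_P: "arrowset push L R \<subseteq> P"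
  show "R \<subseteq> star_bullet perp push P L"
  proof
    fix \<pi> assume "\<pi> \<in> R"
    have "push t \<pi>' \<in> P" if "t \<in> L" "\<pi>' \<in> bclos perp {\<pi>}" for t \<pi>'
    proof -
      have "\<pi>' \<in> R"
        using assms \<open>\<pi> \<in> R\<close> that(2) unfolding Pbullet_iff_upward_closed by blast
      with \<open>t \<in> L\<close> have "push t \<pi>' \<in> arrowset push L R"
        unfolding arrowset_def by blast
      with arrow_P show ?thesis by blast
    qed
    then show "\<pi> \<in> star_bullet perp push P L"
      unfolding star_bullet_def by blast
  qed
qed

theorem mainTheorem3:
  fixes perp :: "'l \<Rightarrow> 'p \<Rightarrow> bool" and push :: "'l \<Rightarrow> 'p \<Rightarrow> 'p"
    and P R :: "'p set" and L :: "'l set"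
  assumes "P \<in> Pbullet perp" and "R \<in> Pbullet perp"
  shows "arrow_bullet perp push L R \<subseteq> P \<longleftrightarrow> R \<subseteq> star_bullet perp push P L"
proof -
  have "arrow_bullet perp push L R \<subseteq> P \<longleftrightarrow> arrowset push L R \<subseteq> P"
    unfolding arrow_bullet_def using hatc_subset_iff[OF assms(1)] .
  also have "\<dots> \<longleftrightarrow> R \<subseteq> star_bullet perp push P L"
    using subset_star_bullet_iff[OF assms(2)] by (rule sym)
  finally show ?thesis .
qed

end
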